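(* Let $\alpha,\beta\in\{-1,0,1\}$, and let $\tilde{C}\in\{0,1\}^{\tilde{K}\times n}$ and $\hat{C}\in\{0,1\}^{\hat{K}\times n}$ be cost matrices of two ordinal objectives on the same $n$ elements. Then the matrix \[ A=\begin{pmatrix}\alpha\,\tilde{C}\\ \beta\,\hat{C}\end{pmatrix} \] is totally unimodular.
   Context: An ordinal objective on $n$ elements with $K$ categories $\eta_1\prec\dots\prec\eta_K$ is given by an assignment $o:\{1,\dots,n\}\to\{\eta_1,\dots,\eta_K\}$; its cost matrix $C\in\{0,1\}^{K\times n}$ has $C_{ji}=1$ if $j\le k$ where $o(i)=\eta_k$, and $C_{ji}=0$ otherwise (each column consists of ones in rows $1,\dots,k$ for some $k\ge1$, followed by zeros). $\tilde{C}$ and $\hat{C}$ are such matrices for assignments $\tilde{o}$ (with $\tilde{K}$ categories) and $\hat{o}$ (with $\hat{K}$ categories). A matrix is totally unimodular if every square submatrix has determinant in $\{-1,0,1\}$. *)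

theory Defs
  imports "Jordan_Normal_Form.Determinant" "Jordan_Normal_Form.DL_Submatrix"
begin

text \<open>An ordinal objective on elements 0..n-1 with K categories eta_1 < ... < eta_K
  is an assignment o of a category index in {1..K} to every element i < n.\<close>
definition ordinal_assignment :: "nat \<Rightarrow> nat \<Rightarrow> (nat \<Rightarrow> nat) \<Rightarrow> bool" where
  "ordinal_assignment K n asg \<longleftrightarrow> (\<forall>i<n. 1 \<le> asg i \<and> asg i \<le> K)"

text \<open>Cost matrix (rows/columns 0-indexed): row j (category eta_(j+1)), column i
  has entry 1 iff j+1 \<le> asg i, i.e. j < asg i.\<close>
definition ordinal_cost_matrix :: "nat \<Rightarrow> nat \<Rightarrow> (nat \<Rightarrow> nat) \<Rightarrow> int mat" where
  "ordinal_cost_matrix K n asg = mat K n (\<lambda>(j, i). if j < asg i then 1 else 0)"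

definition totally_unimodular :: "int mat \<Rightarrow> bool" where
  "totally_unimodular A \<longleftrightarrow>
     (\<forall>I J. I \<subseteq> {..<dim_row A} \<longrightarrow> J \<subseteq> {..<dim_col A} \<longrightarrow> card I = card J \<longrightarrow>
        det (submatrix A I J) \<in> {-1, 0, 1})"

end

theory Submission
  imports Defs
begin

text \<open>Order the rows of the stacked matrix by placing the rows of the first block in reverse
  order above those of the second. Then the support of every column is a contiguous block of
  rows (the categories below o1 i, followed by those below o2 i), so the matrix is an interval
  matrix with rows scaled by \<alpha> or \<beta>, and every square submatrix is again of this form.
  Its determinant is computed along the row of smallest position: if two columns cover it, subtracting
  the one that ends first from the other shortens the latter so that it no longer covers this row;
  once at most one column covers it, Laplace expansion along the row reduces the size.\<close>

definition interval_mat ::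
  "nat \<Rightarrow> nat \<Rightarrow> (nat \<Rightarrow> 'a::comm_ring_1) \<Rightarrow> (nat \<Rightarrow> 'b::linorder) \<Rightarrow> (nat \<Rightarrow> 'b) \<Rightarrow> (nat \<Rightarrow> 'b) \<Rightarrow> 'a mat"
  where "interval_mat k n s p l u = mat k n (\<lambda>(r, c). if l c \<le> p r \<and> p r < u c then s r else 0)"

lemma dim_interval_mat [simp]:
  "dim_row (interval_mat k n s p l u) = k" "dim_col (interval_mat k n s p l u) = n"
  by (simp_all add: interval_mat_def)

lemma interval_mat_carrier [simp]: "interval_mat k n s p l u \<in> carrier_mat k n"
  by (simp add: carrier_matI)

lemma index_interval_mat [simp]:
  "r < k \<Longrightarrow> c < n \<Longrightarrow> interval_mat k n s p l u $$ (r, c) = (if l c \<le> p r \<and> p r < u c then s r else 0)"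
  by (simp add: interval_mat_def)

lemma mat_delete_interval_mat:
  "mat_delete (interval_mat (Suc k) (Suc n) s p l u) i j =
     interval_mat k n (s \<circ> insert_index i) (p \<circ> insert_index i) (l \<circ> insert_index j) (u \<circ> insert_index j)"
  by (rule eq_matI) (auto simp: mat_delete_def insert_index_def)

lemma submatrix_interval_mat:
  assumes "I \<subseteq> {..<k}" and "J \<subseteq> {..<n}"
  shows "submatrix (interval_mat k n s p l u) I J =
     interval_mat (card I) (card J) (s \<circ> pick I) (p \<circ> pick I) (l \<circ> pick J) (u \<circ> pick J)"
proof -
  have rows: "{r. r < k \<and> r \<in> I} = I" and cols: "{c. c < n \<and> c \<in> J} = J"
    using assms by auto
  have "pick I r < k" if "r < card I" for r
    using pick_le[of r k I] that by (simp add: rows)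
  moreover have "pick J c < n" if "c < card J" for c
    using pick_le[of c n J] that by (simp add: cols)
  ultimately show ?thesis
    by (intro eq_matI) (simp_all add: submatrix_def rows cols)
qed

lemma addcol_interval_mat:
  assumes "a < n" and "\<forall>r<k. l a \<le> p r \<and> l b \<le> p r" and "u a \<le> u b"
  shows "addcol (-1) b a (interval_mat k n s p l u) = interval_mat k n s p (l(b := u a)) u"
  by (rule eq_matI) (use assms in \<open>auto simp: not_less\<close>)

lemma det_zero_row:
  assumes A: "(A :: 'a::comm_ring_1 mat) \<in> carrier_mat n n" and "i < n" and "\<forall>j<n. A $$ (i, j) = 0"
  shows "det A = 0"
  using laplace_expansion_row[OF A \<open>i < n\<close>] assms(3) by simp

lemma det_single_entry_row:
  assumes A: "(A :: 'a::comm_ring_1 mat) \<in> carrier_mat n n" and "i < n" and "j < n"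
    and "\<forall>j'<n. j' \<noteq> j \<longrightarrow> A $$ (i, j') = 0"
  shows "det A = A $$ (i, j) * cofactor A i j"
proof -
  have "det A = (\<Sum>j'<n. A $$ (i, j') * cofactor A i j')"
    by (rule laplace_expansion_row[OF A \<open>i < n\<close>])
  also have "\<dots> = A $$ (i, j) * cofactor A i j"
    using assms(3,4) by (subst sum.remove[of _ j]) auto
  finally show ?thesis .
qed

lemma det_interval_mat:
  fixes s :: "nat \<Rightarrow> 'a::comm_ring_1"
  assumes "inj_on p {..<k}" and "\<forall>r<k. s r \<in> {-1, 0, 1}"
  shows "det (interval_mat k k s p l u) \<in> {-1, 0, 1}"
  using assms
proof (induction k arbitrary: s p l u)
  case 0
  show ?case by (simp add: det_def')
next
  case (Suc k)
  obtain r0 where r0: "r0 < Suc k" "\<forall>r<Suc k. p r0 \<le> p r"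
    using ex_is_arg_min_if_finite[of "{..<Suc k}" p] by (auto simp: is_arg_min_linorder)
  let ?S = "\<lambda>l. {c. c < Suc k \<and> l c \<le> p r0 \<and> p r0 < u c}"
  have "det (interval_mat (Suc k) (Suc k) s p l u) \<in> {-1, 0, 1}" if "card (?S l) = m" for m l
    using that
  proof (induction m arbitrary: l rule: less_induct)
    case (less m l)
    let ?A = "interval_mat (Suc k) (Suc k) s p l u"
    have fin: "finite (?S l)" by simp
    consider "?S l = {}" | c0 where "?S l = {c0}"
      | a b where "a \<in> ?S l" "b \<in> ?S l" "a \<noteq> b" "u a \<le> u b"
    proof (cases "?S l = {}")
      case False
      then obtain a where "a \<in> ?S l" "\<forall>c\<in>?S l. u a \<le> u c"
        using ex_is_arg_min_if_finite[OF fin, of u] by (auto simp: is_arg_min_linorder)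
      then show ?thesis
        using that(2)[of a] that(3)[of a] by blast
    qed
    then show ?case
    proof cases
      case 1
      then have "det ?A = 0"
        using r0 by (intro det_zero_row[of ?A "Suc k" r0]) auto
      then show ?thesis by simp
    next
      case (2 c0)
      then have "c0 \<in> ?S l" by blast
      then have "c0 < Suc k" and "?A $$ (r0, c0) = s r0"
        using r0 by auto
      moreover have "det ?A = ?A $$ (r0, c0) * cofactor ?A r0 c0"
        using r0 2 \<open>c0 < Suc k\<close> by (intro det_single_entry_row[of ?A "Suc k"]) auto
      moreover have "det (mat_delete ?A r0 c0) \<in> {-1, 0, 1}"
        unfolding mat_delete_interval_mat
      proof (rule Suc.IH)
        show "inj_on (p \<circ> insert_index r0) {..<k}"
          using Suc.prems(1) insert_index_inj_on[of r0 "{..<k}"]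
          by (auto intro!: comp_inj_on inj_on_subset[OF Suc.prems(1)] simp: insert_index_def)
      qed (use Suc.prems(2) in \<open>auto simp: insert_index_def\<close>)
      ultimately show ?thesis
        using Suc.prems(2) r0 by (auto simp: cofactor_def minus_one_power_iff)
    next
      case (3 a b)
      let ?l = "l(b := u a)"
      have "det ?A = det (addcol (-1) b a ?A)"
        using 3 by (intro det_addcol[symmetric]) auto
      also have "\<dots> = det (interval_mat (Suc k) (Suc k) s p ?l u)"
        using 3 r0 by (subst addcol_interval_mat) force+
      finally have "det ?A = det (interval_mat (Suc k) (Suc k) s p ?l u)" .
      moreover have "?S ?l = ?S l - {b}"
        using 3 by auto
      then have "card (?S ?l) < m"
        using card_Diff1_less[OF fin \<open>b \<in> ?S l\<close>] less.prems by simp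
      ultimately show ?thesis
        using less.IH by simp
    qed
  qed
  then show ?case by blast
qed

lemma totally_unimodular_interval_mat:
  assumes "inj_on p {..<k}" and "\<forall>r<k. s r \<in> {-1, 0, 1}"
  shows "totally_unimodular (interval_mat k n s p l u)"
  unfolding totally_unimodular_def
proof (intro allI impI)
  fix I J
  assume I: "I \<subseteq> {..<dim_row (interval_mat k n s p l u)}"
    and J: "J \<subseteq> {..<dim_col (interval_mat k n s p l u)}" and "card I = card J"
  have "inj_on (pick I) {..<card I}"
    by (rule inj_onI) (metis lessThan_iff linorder_neqE_nat pick_mono less_irrefl)
  moreover have "pick I ` {..<card I} \<subseteq> I"
    by (auto intro: pick_in_set)
  ultimately have "inj_on (p \<circ> pick I) {..<card I}"
    using I assms(1) by (simp add: comp_inj_on inj_on_subset)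
  moreover have "\<forall>r<card I. (s \<circ> pick I) r \<in> {-1, 0, 1}"
    using \<open>pick I ` {..<card I} \<subseteq> I\<close> I assms(2) by auto
  ultimately have "det (interval_mat (card I) (card I) (s \<circ> pick I) (p \<circ> pick I)
      (l \<circ> pick J) (u \<circ> pick J)) \<in> {-1, 0, 1}"
    by (rule det_interval_mat)
  then show "det (submatrix (interval_mat k n s p l u) I J) \<in> {-1, 0, 1}"
    using I J \<open>card I = card J\<close> by (simp add: submatrix_interval_mat)
qed

theorem theorem1:
  fixes \<alpha> \<beta> :: int and n K1 K2 :: nat and o1 o2 :: "nat \<Rightarrow> nat"
  assumes "\<alpha> \<in> {-1, 0, 1}" and "\<beta> \<in> {-1, 0, 1}"
    and "ordinal_assignment K1 n o1" and "ordinal_assignment K2 n o2"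
  shows "totally_unimodular
           ((\<alpha> \<cdot>\<^sub>m ordinal_cost_matrix K1 n o1) @\<^sub>r (\<beta> \<cdot>\<^sub>m ordinal_cost_matrix K2 n o2))"
proof -
  define pos :: "nat \<Rightarrow> int" where "pos r = (if r < K1 then - int r else int (r - K1) + 1)" for r
  define scale :: "nat \<Rightarrow> int" where "scale r = (if r < K1 then \<alpha> else \<beta>)" for r
  have "(\<alpha> \<cdot>\<^sub>m ordinal_cost_matrix K1 n o1) @\<^sub>r (\<beta> \<cdot>\<^sub>m ordinal_cost_matrix K2 n o2) =
      interval_mat (K1 + K2) n scale pos (\<lambda>c. 1 - int (o1 c)) (\<lambda>c. int (o2 c) + 1)"
    by (rule eq_matI)
      (auto simp: append_rows_def ordinal_cost_matrix_def index_mat_four_block pos_def scale_def)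
  moreover have "inj_on pos {..<K1 + K2}"
    by (auto simp: inj_on_def pos_def)
  ultimately show ?thesis
    using assms(1,2) by (simp add: totally_unimodular_interval_mat scale_def)
qed

end
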